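(* Let $P,Q$ be finite posets, $R$ an indecomposable commutative unital ring, and $\Phi:I^3(P,R)\to I^3(Q,R)$ an $R$-linear algebra isomorphism. Then $\Phi(J^3_1(P,R))=J^3_1(Q,R)$, and there is a bijection $\varphi:P\to Q$ such that $\Phi(e_x)-e_{\varphi(x)}\in J^3_1(Q,R)$ for all $x\in P$ (equivalently, the induced isomorphism $I^3(P,R)/J^3_1(P,R)\to I^3(Q,R)/J^3_1(Q,R)$ maps $e_x+J^3_1(P,R)$ to $e_{\varphi(x)}+J^3_1(Q,R)$).
   Context: A commutative ring is indecomposable if its only idempotents are $0$ and $1$. For a finite poset $P$, $P^3_\le=\{(x,y,z)\in P^3: x\le y\le z\}$, and $I^3(P,R)$ is the $R$-module of functions $f:P^3_\le\to R$ with multiplication $(fg)(x_1,x_2,x_3)=\sum f(x_1,y_1,y_2)g(y_1,y_2,x_3)$ over all $x_1\le y_1\le x_2\le y_2\le x_3$. For $x\le y\le z$, $e_{xyz}$ is the function equal to $1$ at $(x,y,z)$ and $0$ elsewhere, and $e_x:=e_{xxx}$. $J^3_1(P,R)=\{f\in I^3(P,R): f(x,x,x)=0 \text{ for all } x\in P\}$, an ideal. *)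

theory Defs
  imports Main
begin

definition finite_poset :: "'a set \<Rightarrow> ('a \<Rightarrow> 'a \<Rightarrow> bool) \<Rightarrow> bool" where
  "finite_poset P le \<longleftrightarrow> finite P
     \<and> (\<forall>x\<in>P. le x x)
     \<and> (\<forall>x\<in>P. \<forall>y\<in>P. le x y \<and> le y x \<longrightarrow> x = y)
     \<and> (\<forall>x\<in>P. \<forall>y\<in>P. \<forall>z\<in>P. le x y \<and> le y z \<longrightarrow> le x z)"

definition indecomposable_ring :: "'r::comm_ring_1 itself \<Rightarrow> bool" where
  "indecomposable_ring _ \<longleftrightarrow> (\<forall>e::'r. e * e = e \<longrightarrow> e = 0 \<or> e = 1)"

definition P3le :: "'a set \<Rightarrow> ('a \<Rightarrow> 'a \<Rightarrow> bool) \<Rightarrow> ('a \<times> 'a \<times> 'a) set" where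
  "P3le P le = {(x, y, z). x \<in> P \<and> y \<in> P \<and> z \<in> P \<and> le x y \<and> le y z}"

text \<open>Elements of I^3(P,R): functions on P^3_le, represented as functions vanishing outside.\<close>
definition I3 :: "'a set \<Rightarrow> ('a \<Rightarrow> 'a \<Rightarrow> bool) \<Rightarrow> ('a \<times> 'a \<times> 'a \<Rightarrow> 'r::comm_ring_1) set" where
  "I3 P le = {f. \<forall>t. t \<notin> P3le P le \<longrightarrow> f t = 0}"

definition mult3 :: "'a set \<Rightarrow> ('a \<Rightarrow> 'a \<Rightarrow> bool) \<Rightarrow> ('a \<times> 'a \<times> 'a \<Rightarrow> 'r::comm_ring_1)
    \<Rightarrow> ('a \<times> 'a \<times> 'a \<Rightarrow> 'r) \<Rightarrow> ('a \<times> 'a \<times> 'a \<Rightarrow> 'r)" where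
  "mult3 P le f g = (\<lambda>(x1, x2, x3).
     if (x1, x2, x3) \<in> P3le P le then
       (\<Sum>(y1, y2)\<in>{(y1, y2). y1 \<in> P \<and> y2 \<in> P \<and> le x1 y1 \<and> le y1 x2 \<and> le x2 y2 \<and> le y2 x3}.
          f (x1, y1, y2) * g (y1, y2, x3))
     else 0)"

definition J31 :: "'a set \<Rightarrow> ('a \<Rightarrow> 'a \<Rightarrow> bool) \<Rightarrow> ('a \<times> 'a \<times> 'a \<Rightarrow> 'r::comm_ring_1) set" where
  "J31 P le = {f \<in> I3 P le. \<forall>x\<in>P. f (x, x, x) = 0}"

definition e3 :: "'a \<Rightarrow> 'a \<Rightarrow> 'a \<Rightarrow> ('a \<times> 'a \<times> 'a \<Rightarrow> 'r::comm_ring_1)" where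
  "e3 x y z = (\<lambda>t. if t = (x, y, z) then 1 else 0)"

definition e1 :: "'a \<Rightarrow> ('a \<times> 'a \<times> 'a \<Rightarrow> 'r::comm_ring_1)" where
  "e1 x = e3 x x x"

definition alg_iso3 :: "'a set \<Rightarrow> ('a \<Rightarrow> 'a \<Rightarrow> bool) \<Rightarrow> 'b set \<Rightarrow> ('b \<Rightarrow> 'b \<Rightarrow> bool)
    \<Rightarrow> (('a \<times> 'a \<times> 'a \<Rightarrow> 'r::comm_ring_1) \<Rightarrow> ('b \<times> 'b \<times> 'b \<Rightarrow> 'r)) \<Rightarrow> bool" where
  "alg_iso3 P leP Q leQ \<Phi> \<longleftrightarrow>
     bij_betw \<Phi> (I3 P leP) (I3 Q leQ)
     \<and> (\<forall>f\<in>I3 P leP. \<forall>g\<in>I3 P leP. \<Phi> (\<lambda>t. f t + g t) = (\<lambda>t. \<Phi> f t + \<Phi> g t))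
     \<and> (\<forall>c. \<forall>f\<in>I3 P leP. \<Phi> (\<lambda>t. c * f t) = (\<lambda>t. c * \<Phi> f t))
     \<and> (\<forall>f\<in>I3 P leP. \<forall>g\<in>I3 P leP. \<Phi> (mult3 P leP f g) = mult3 Q leQ (\<Phi> f) (\<Phi> g))"

end

theory Submission
  imports Defs
begin

text \<open>For \<open>y \<in> Q\<close>, the functional \<open>f \<mapsto> \<Phi> f (y,y,y)\<close> is an \<open>R\<close>-algebra homomorphism
  \<open>I\<^sup>3(P,R) \<rightarrow> R\<close>, since a product evaluated at a diagonal triple is the product of the diagonal
  values. Such a character kills every off-diagonal basis element \<open>e\<^sub>a\<^sub>b\<^sub>c\<close>: each of them is a
  product with a basis element that annihilates it from the other side, and \<open>R\<close> is commutative.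
  So a character is determined by its values at the orthogonal idempotents \<open>e\<^sub>x\<close>, and as \<open>R\<close> is
  indecomposable a nonzero character is evaluation at one diagonal point. This gives a map
  \<open>\<psi> : Q \<rightarrow> P\<close> with \<open>\<Phi> f (y,y,y) = f (\<psi> y, \<psi> y, \<psi> y)\<close>; the same construction for \<open>\<Phi>\<^sup>-\<^sup>1\<close>
  yields the inverse \<open>\<phi>\<close> of \<open>\<psi>\<close>, which satisfies both claims.\<close>

lemma finite_posetD:
  assumes "finite_poset P le"
  shows "finite P" and "x \<in> P \<Longrightarrow> le x x"
    and "x \<in> P \<Longrightarrow> y \<in> P \<Longrightarrow> le x y \<Longrightarrow> le y x \<Longrightarrow> x = y"
  using assms unfolding finite_poset_def by blast+

lemma finite_P3le: "finite P \<Longrightarrow> finite (P3le P le)"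
  by (rule finite_subset[of _ "P \<times> P \<times> P"]) (auto simp: P3le_def)

lemma zero_in_I3: "(\<lambda>_. 0) \<in> I3 P le"
  by (simp add: I3_def)

lemma add_in_I3: "f \<in> I3 P le \<Longrightarrow> g \<in> I3 P le \<Longrightarrow> (\<lambda>t. f t + g t) \<in> I3 P le"
  by (simp add: I3_def)

lemma diff_in_I3: "f \<in> I3 P le \<Longrightarrow> g \<in> I3 P le \<Longrightarrow> (\<lambda>t. f t - g t) \<in> I3 P le"
  by (simp add: I3_def)

lemma smult_in_I3: "f \<in> I3 P le \<Longrightarrow> (\<lambda>t. c * f t) \<in> I3 P le"
  by (simp add: I3_def)

lemma mult3_in_I3: "mult3 P le f g \<in> I3 P le"
  by (auto simp: I3_def mult3_def)

lemma sum_in_I3: "finite T \<Longrightarrow> (\<And>t. t \<in> T \<Longrightarrow> g t \<in> I3 P le) \<Longrightarrow> (\<lambda>s. \<Sum>t\<in>T. g t s) \<in> I3 P le"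
  by (induction T rule: finite_induct) (auto simp: I3_def)

lemma e3_in_I3: "(a, b, c) \<in> P3le P le \<Longrightarrow> e3 a b c \<in> I3 P le"
  by (auto simp: I3_def e3_def)

lemma e1_in_I3: "finite_poset P le \<Longrightarrow> x \<in> P \<Longrightarrow> e1 x \<in> I3 P le"
  by (simp add: e1_def e3_in_I3 P3le_def finite_posetD)

lemma I3_eq_sum_e3:
  assumes "finite P" and "f \<in> I3 P le"
  shows "f = (\<lambda>s. \<Sum>(a, b, c)\<in>P3le P le. f (a, b, c) * e3 a b c s)"
proof
  fix s
  have "(\<Sum>(a, b, c)\<in>P3le P le. f (a, b, c) * e3 a b c s) = (\<Sum>t\<in>P3le P le. if s = t then f s else 0)"
    by (rule sum.cong) (auto simp: e3_def)
  also have "\<dots> = f s"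
    using assms by (simp add: finite_P3le I3_def del: split_paired_All)
  finally show "f s = (\<Sum>(a, b, c)\<in>P3le P le. f (a, b, c) * e3 a b c s)" ..
qed

lemma mult3_e3_left:
  assumes "finite P"
  shows "mult3 P le (e3 a b c) g (x1, x2, x3) =
    (if (x1, x2, x3) \<in> P3le P le \<and> x1 = a \<and> b \<in> P \<and> c \<in> P \<and> le a b \<and> le b x2 \<and> le x2 c \<and> le c x3
     then g (b, c, x3) else 0)"
proof -
  define S where "S = {(y1, y2). y1 \<in> P \<and> y2 \<in> P \<and> le x1 y1 \<and> le y1 x2 \<and> le x2 y2 \<and> le y2 x3}"
  have "finite S"
    using assms by (auto intro: finite_subset[of _ "P \<times> P"] simp: S_def)
  have "(\<Sum>(y1, y2)\<in>S. e3 a b c (x1, y1, y2) * g (y1, y2, x3))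
      = (\<Sum>p\<in>S. if p = (b, c) then (if x1 = a then g (b, c, x3) else 0) else 0)"
    by (rule sum.cong) (auto simp: e3_def split: if_splits)
  also have "\<dots> = (if (b, c) \<in> S \<and> x1 = a then g (b, c, x3) else 0)"
    using \<open>finite S\<close> by simp
  finally show ?thesis
    unfolding mult3_def S_def[symmetric] by (auto simp: S_def)
qed

lemma mult3_e3_e3:
  assumes "finite_poset P le" and "a \<in> P" "b \<in> P" "d \<in> P" "le a b" "le b d"
  shows "mult3 P le (e3 a b b) (e3 b b d) = e3 a b d"
  using assms
  by (intro ext, simp only: split_paired_all mult3_e3_left[OF finite_posetD(1)[OF assms(1)]])
    (auto simp: finite_posetD e3_def P3le_def)

lemma mult3_e3_e3_zero:
  assumes "finite P" and "(b, c) \<noteq> (b', c')"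
  shows "mult3 P le (e3 a b c) (e3 b' c' d) = (\<lambda>_. 0)"
  using assms(2)
  by (intro ext, simp only: split_paired_all mult3_e3_left[OF assms(1)]) (auto simp: e3_def)

locale I3_character =
  fixes P :: "'a set" and le :: "'a \<Rightarrow> 'a \<Rightarrow> bool"
    and \<chi> :: "('a \<times> 'a \<times> 'a \<Rightarrow> 'r::comm_ring_1) \<Rightarrow> 'r"
  assumes poset: "finite_poset P le"
    and additive: "f \<in> I3 P le \<Longrightarrow> g \<in> I3 P le \<Longrightarrow> \<chi> (\<lambda>t. f t + g t) = \<chi> f + \<chi> g"
    and homogeneous: "f \<in> I3 P le \<Longrightarrow> \<chi> (\<lambda>t. c * f t) = c * \<chi> f"
    and multiplicative: "f \<in> I3 P le \<Longrightarrow> g \<in> I3 P le \<Longrightarrow> \<chi> (mult3 P le f g) = \<chi> f * \<chi> g"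
begin

lemma character_zero: "\<chi> (\<lambda>_. 0) = 0"
  using homogeneous[OF zero_in_I3, of 0] by simp

lemma character_sum:
  "finite T \<Longrightarrow> (\<And>t. t \<in> T \<Longrightarrow> g t \<in> I3 P le) \<Longrightarrow> \<chi> (\<lambda>s. \<Sum>t\<in>T. g t s) = (\<Sum>t\<in>T. \<chi> (g t))"
proof (induction T rule: finite_induct)
  case empty
  then show ?case by (simp add: character_zero)
next
  case (insert t T)
  then show ?case by (simp add: additive sum_in_I3)
qed

lemma character_e3_mult3:
  assumes "(a, b, c) \<in> P3le P le" and "(a', b', c') \<in> P3le P le"
  shows "\<chi> (mult3 P le (e3 a b c) (e3 a' b' c')) = \<chi> (e3 a b c) * \<chi> (e3 a' b' c')"
  using assms by (simp add: multiplicative e3_in_I3)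

lemma character_e3_off_diagonal:
  assumes abc: "(a, b, c) \<in> P3le P le" and off: "a \<noteq> b \<or> b \<noteq> c"
  shows "\<chi> (e3 a b c) = 0"
proof -
  have fin: "finite P" and P: "a \<in> P" "b \<in> P" "c \<in> P" and le: "le a b" "le b c"
    using abc poset by (auto simp: P3le_def finite_posetD)
  have reflP: "le x x" if "x \<in> P" for x
    using that poset by (simp add: finite_posetD)
  have diag: "(x, x, x) \<in> P3le P le" if "x \<in> P" for x
    using that poset by (simp add: P3le_def finite_posetD)
  have ab: "(a, b, b) \<in> P3le P le" and bc: "(b, b, c) \<in> P3le P le"
    using P le poset by (auto simp: P3le_def finite_posetD)
  have abb: "\<chi> (e3 a b b) = 0" if "a \<noteq> b"
  proof -
    have "\<chi> (e3 a b b) = \<chi> (mult3 P le (e3 a b b) (e3 b b b))"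
      by (simp add: mult3_e3_e3[OF poset P(1,2,2) le(1) reflP[OF P(2)]])
    also have "\<dots> = \<chi> (e3 b b b) * \<chi> (e3 a b b)"
      by (simp add: character_e3_mult3[OF ab diag[OF P(2)]] mult.commute)
    also have "\<dots> = \<chi> (mult3 P le (e3 b b b) (e3 a b b))"
      by (rule character_e3_mult3[OF diag[OF P(2)] ab, symmetric])
    also have "\<dots> = 0"
      using that by (simp add: mult3_e3_e3_zero[OF fin] character_zero)
    finally show ?thesis .
  qed
  have aac: "\<chi> (e3 a a c) = 0" if "a = b" "a \<noteq> c"
  proof -
    have aa: "(a, a, c) \<in> P3le P le" using bc that(1) by simp
    have "\<chi> (e3 a a c) = \<chi> (mult3 P le (e3 a a a) (e3 a a c))"
      by (simp add: mult3_e3_e3[OF poset P(1,1,3) reflP[OF P(1)] le(2)[folded that(1)]])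
    also have "\<dots> = \<chi> (e3 a a c) * \<chi> (e3 a a a)"
      by (simp add: character_e3_mult3[OF diag[OF P(1)] aa] mult.commute)
    also have "\<dots> = \<chi> (mult3 P le (e3 a a c) (e3 a a a))"
      by (rule character_e3_mult3[OF aa diag[OF P(1)], symmetric])
    also have "\<dots> = 0"
      using that by (simp add: mult3_e3_e3_zero[OF fin] character_zero)
    finally show ?thesis .
  qed
  show ?thesis
  proof (cases "a = b")
    case True
    then show ?thesis using aac off by simp
  next
    case False
    have "\<chi> (e3 a b c) = \<chi> (e3 a b b) * \<chi> (e3 b b c)"
      using character_e3_mult3[OF ab bc] by (simp add: mult3_e3_e3[OF poset P le])
    then show ?thesis using abb[OF False] by simp
  qed
qed

lemma character_eq_diagonal_sum:
  assumes f: "f \<in> I3 P le"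
  shows "\<chi> f = (\<Sum>x\<in>P. f (x, x, x) * \<chi> (e1 x))"
proof -
  have fin: "finite P" using poset by (rule finite_posetD)
  have diag: "(\<lambda>x. (x, x, x)) ` P \<subseteq> P3le P le"
    using poset by (auto simp: P3le_def finite_posetD)
  have "\<chi> f = \<chi> (\<lambda>s. \<Sum>(a, b, c)\<in>P3le P le. f (a, b, c) * e3 a b c s)"
    by (rule arg_cong[OF I3_eq_sum_e3[OF fin f]])
  also have "\<dots> = (\<Sum>(a, b, c)\<in>P3le P le. \<chi> (\<lambda>s. f (a, b, c) * e3 a b c s))"
    using character_sum[of "P3le P le" "\<lambda>(a, b, c) s. f (a, b, c) * e3 a b c s"]
    by (auto simp: finite_P3le[OF fin] smult_in_I3 e3_in_I3 case_prod_unfold)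
  also have "\<dots> = (\<Sum>(a, b, c)\<in>P3le P le. f (a, b, c) * \<chi> (e3 a b c))"
    by (rule sum.cong) (auto simp: homogeneous e3_in_I3)
  also have "\<dots> = (\<Sum>(a, b, c)\<in>(\<lambda>x. (x, x, x)) ` P. f (a, b, c) * \<chi> (e3 a b c))"
  proof (rule sum.mono_neutral_right[OF finite_P3le[OF fin] diag], clarify)
    fix a b c
    assume "(a, b, c) \<in> P3le P le" and "(a, b, c) \<notin> (\<lambda>x. (x, x, x)) ` P"
    moreover from this have "a \<noteq> b \<or> b \<noteq> c" by (auto simp: P3le_def)
    ultimately show "f (a, b, c) * \<chi> (e3 a b c) = 0"
      by (simp add: character_e3_off_diagonal)
  qed
  also have "\<dots> = (\<Sum>x\<in>P. f (x, x, x) * \<chi> (e1 x))"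
    by (subst sum.reindex) (auto simp: inj_on_def e1_def)
  finally show ?thesis .
qed

lemma character_e1_idempotent:
  assumes "x \<in> P"
  shows "\<chi> (e1 x) * \<chi> (e1 x) = \<chi> (e1 x)"
proof -
  have "mult3 P le (e1 x) (e1 x) = (e1 x :: 'a \<times> 'a \<times> 'a \<Rightarrow> 'r)"
    unfolding e1_def using assms poset by (simp add: mult3_e3_e3 finite_posetD)
  then show ?thesis
    using multiplicative[OF e1_in_I3 e1_in_I3, OF poset assms poset assms] by simp
qed

lemma character_e1_orthogonal:
  assumes "x \<in> P" "y \<in> P" "x \<noteq> y"
  shows "\<chi> (e1 x) * \<chi> (e1 y) = 0"
proof -
  have "mult3 P le (e1 x) (e1 y) = (\<lambda>_. 0 :: 'r)"
    unfolding e1_def using assms poset by (simp add: mult3_e3_e3_zero finite_posetD)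
  then show ?thesis
    using multiplicative[OF e1_in_I3 e1_in_I3, OF poset assms(1) poset assms(2)]
    by (simp add: character_zero)
qed

theorem character_eq_diagonal_eval:
  assumes ind: "indecomposable_ring TYPE('r)" and nonzero: "\<exists>f\<in>I3 P le. \<chi> f \<noteq> 0"
  shows "\<exists>x\<in>P. \<forall>f\<in>I3 P le. \<chi> f = f (x, x, x)"
proof -
  obtain x where x: "x \<in> P" "\<chi> (e1 x) \<noteq> 0"
  proof -
    from nonzero obtain f where "f \<in> I3 P le" "\<chi> f \<noteq> 0" by blast
    then have "(\<Sum>x\<in>P. f (x, x, x) * \<chi> (e1 x)) \<noteq> 0"
      by (simp add: character_eq_diagonal_sum)
    then obtain x where "x \<in> P" "f (x, x, x) * \<chi> (e1 x) \<noteq> 0"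
      by (rule sum.not_neutral_contains_not_neutral)
    with that show ?thesis by force
  qed
  have one: "\<chi> (e1 x) = 1"
    using ind x character_e1_idempotent unfolding indecomposable_ring_def by blast
  have zero: "\<chi> (e1 y) = 0" if "y \<in> P" "y \<noteq> x" for y
    using character_e1_orthogonal[OF x(1) that(1)] that(2) one by simp
  have "\<chi> f = f (x, x, x)" if "f \<in> I3 P le" for f
  proof -
    have "\<chi> f = (\<Sum>y\<in>P. if y = x then f (x, x, x) else 0)"
      unfolding character_eq_diagonal_sum[OF that] by (rule sum.cong) (auto simp: one zero)
    also have "\<dots> = f (x, x, x)"
      using x(1) finite_posetD(1)[OF poset] by simp
    finally show ?thesis .
  qed
  with x(1) show ?thesis by blast
qed

end

lemma mult3_diagonal:
  assumes "finite_poset P le" and "y \<in> P"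
  shows "mult3 P le f g (y, y, y) = f (y, y, y) * g (y, y, y)"
proof -
  have "{(y1, y2). y1 \<in> P \<and> y2 \<in> P \<and> le y y1 \<and> le y1 y \<and> le y y2 \<and> le y2 y} = {(y, y)}"
    using assms by (auto simp: finite_posetD)
  moreover have "(y, y, y) \<in> P3le P le"
    using assms by (simp add: P3le_def finite_posetD)
  ultimately show ?thesis
    by (simp add: mult3_def)
qed

lemma alg_iso3D:
  assumes "alg_iso3 P leP Q leQ \<Phi>"
  shows "bij_betw \<Phi> (I3 P leP) (I3 Q leQ)"
    and "f \<in> I3 P leP \<Longrightarrow> g \<in> I3 P leP \<Longrightarrow> \<Phi> (\<lambda>t. f t + g t) = (\<lambda>t. \<Phi> f t + \<Phi> g t)"
    and "f \<in> I3 P leP \<Longrightarrow> \<Phi> (\<lambda>t. c * f t) = (\<lambda>t. c * \<Phi> f t)"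
    and "f \<in> I3 P leP \<Longrightarrow> g \<in> I3 P leP \<Longrightarrow> \<Phi> (mult3 P leP f g) = mult3 Q leQ (\<Phi> f) (\<Phi> g)"
  using assms unfolding alg_iso3_def by blast+

lemma alg_iso3_inv:
  assumes iso: "alg_iso3 P leP Q leQ \<Phi>"
  shows "alg_iso3 Q leQ P leP (inv_into (I3 P leP) \<Phi>)"
proof -
  define \<Psi> where "\<Psi> = inv_into (I3 P leP) \<Phi>"
  note bij = alg_iso3D(1)[OF iso]
  have \<Psi>_I3: "\<Psi> g \<in> I3 P leP" if "g \<in> I3 Q leQ" for g
    unfolding \<Psi>_def by (rule bij_betw_apply[OF bij_betw_inv_into[OF bij] that])
  have \<Phi>_\<Psi>: "\<Phi> (\<Psi> g) = g" if "g \<in> I3 Q leQ" for g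
    using bij that unfolding \<Psi>_def by (rule bij_betw_inv_into_right)
  have \<Psi>_\<Phi>: "\<Psi> (\<Phi> f) = f" if "f \<in> I3 P leP" for f
    using bij that unfolding \<Psi>_def by (simp add: bij_betw_imp_inj_on)
  have "\<Psi> (\<lambda>t. f t + g t) = (\<lambda>t. \<Psi> f t + \<Psi> g t)" if "f \<in> I3 Q leQ" "g \<in> I3 Q leQ" for f g
    using \<Psi>_\<Phi>[OF add_in_I3[OF \<Psi>_I3 \<Psi>_I3, OF that]]
    by (simp add: alg_iso3D(2)[OF iso] \<Psi>_I3 \<Phi>_\<Psi> that)
  moreover have "\<Psi> (\<lambda>t. c * f t) = (\<lambda>t. c * \<Psi> f t)" if "f \<in> I3 Q leQ" for c f
    using \<Psi>_\<Phi>[OF smult_in_I3[OF \<Psi>_I3, OF that]]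
    by (simp add: alg_iso3D(3)[OF iso] \<Psi>_I3 \<Phi>_\<Psi> that)
  moreover have "\<Psi> (mult3 Q leQ f g) = mult3 P leP (\<Psi> f) (\<Psi> g)" if "f \<in> I3 Q leQ" "g \<in> I3 Q leQ" for f g
    using \<Psi>_\<Phi>[OF mult3_in_I3[of P leP "\<Psi> f" "\<Psi> g"]]
    by (simp add: alg_iso3D(4)[OF iso] \<Psi>_I3 \<Phi>_\<Psi> that)
  moreover have "bij_betw \<Psi> (I3 Q leQ) (I3 P leP)"
    unfolding \<Psi>_def by (rule bij_betw_inv_into[OF bij])
  ultimately show ?thesis
    unfolding alg_iso3_def \<Psi>_def by blast
qed

lemma alg_iso3_diagonal_character:
  assumes "finite_poset P leP" and "finite_poset Q leQ"
    and "alg_iso3 P leP Q leQ \<Phi>" and "y \<in> Q"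
  shows "I3_character P leP (\<lambda>f. \<Phi> f (y, y, y))"
  using assms
  by unfold_locales (simp_all add: alg_iso3D mult3_diagonal bij_betw_apply mult3_in_I3)

lemma alg_iso3_diagonal_map:
  fixes \<Phi> :: "('a \<times> 'a \<times> 'a \<Rightarrow> 'r::comm_ring_1) \<Rightarrow> ('b \<times> 'b \<times> 'b \<Rightarrow> 'r)"
  assumes fP: "finite_poset P leP" and fQ: "finite_poset Q leQ"
    and ind: "indecomposable_ring TYPE('r)" and iso: "alg_iso3 P leP Q leQ \<Phi>"
  obtains \<psi> where "\<And>y. y \<in> Q \<Longrightarrow> \<psi> y \<in> P"
    and "\<And>y f. y \<in> Q \<Longrightarrow> f \<in> I3 P leP \<Longrightarrow> \<Phi> f (y, y, y) = f (\<psi> y, \<psi> y, \<psi> y)"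
proof -
  have "\<exists>x\<in>P. \<forall>f\<in>I3 P leP. \<Phi> f (y, y, y) = f (x, x, x)" if y: "y \<in> Q" for y
  proof -
    interpret I3_character P leP "\<lambda>f. \<Phi> f (y, y, y)"
      by (rule alg_iso3_diagonal_character[OF fP fQ iso y])
    obtain f where "f \<in> I3 P leP" "\<Phi> f = e1 y"
      using e1_in_I3[OF fQ y] alg_iso3D(1)[OF iso] by (metis bij_betw_def imageE)
    then have "\<exists>f\<in>I3 P leP. \<Phi> f (y, y, y) \<noteq> 0"
      by (intro bexI[of _ f]) (simp_all add: e1_def e3_def)
    then show ?thesis
      by (rule character_eq_diagonal_eval[OF ind])
  qed
  then show ?thesis
    using that by metis
qed

lemma diagonal_maps_inverse:
  assumes fP: "finite_poset P leP"
    and \<Phi>: "\<And>f. f \<in> I3 P leP \<Longrightarrow> \<Phi> f \<in> I3 Q leQ"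
    and \<Psi>_\<Phi>: "\<And>f. f \<in> I3 P leP \<Longrightarrow> \<Psi> (\<Phi> f) = f"
    and \<psi>: "\<And>y f. y \<in> Q \<Longrightarrow> f \<in> I3 P leP \<Longrightarrow> \<Phi> f (y, y, y) = f (\<psi> y, \<psi> y, \<psi> y)"
    and \<phi>P: "\<phi> x \<in> Q"
    and \<phi>: "\<And>g. g \<in> I3 Q leQ \<Longrightarrow> \<Psi> g (x, x, x) = g (\<phi> x, \<phi> x, \<phi> x)"
    and x: "x \<in> P"
  shows "\<psi> (\<phi> x) = x"
proof -
  have "(1 :: 'r::comm_ring_1) = e1 x (x, x, x)"
    by (simp add: e1_def e3_def)
  also have "\<dots> = \<Psi> (\<Phi> (e1 x)) (x, x, x)"
    by (simp add: \<Psi>_\<Phi> e1_in_I3[OF fP x])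
  also have "\<dots> = e1 x (\<psi> (\<phi> x), \<psi> (\<phi> x), \<psi> (\<phi> x))"
    by (simp add: \<phi> \<psi> \<Phi> \<phi>P e1_in_I3[OF fP x])
  finally show ?thesis
    by (simp add: e1_def e3_def split: if_splits)
qed

lemma alg_iso3_diagonal_bij:
  fixes \<Phi> :: "('a \<times> 'a \<times> 'a \<Rightarrow> 'r::comm_ring_1) \<Rightarrow> ('b \<times> 'b \<times> 'b \<Rightarrow> 'r)"
  assumes fP: "finite_poset P leP" and fQ: "finite_poset Q leQ"
    and ind: "indecomposable_ring TYPE('r)" and iso: "alg_iso3 P leP Q leQ \<Phi>"
  obtains \<psi> where "bij_betw \<psi> Q P"
    and "\<And>y f. y \<in> Q \<Longrightarrow> f \<in> I3 P leP \<Longrightarrow> \<Phi> f (y, y, y) = f (\<psi> y, \<psi> y, \<psi> y)"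
proof -
  define \<Psi> where "\<Psi> = inv_into (I3 P leP) \<Phi>"
  note bij = alg_iso3D(1)[OF iso]
  have \<Phi>_I3: "\<And>f. f \<in> I3 P leP \<Longrightarrow> \<Phi> f \<in> I3 Q leQ"
    and \<Psi>_I3: "\<And>g. g \<in> I3 Q leQ \<Longrightarrow> \<Psi> g \<in> I3 P leP"
    and \<Psi>_\<Phi>: "\<And>f. f \<in> I3 P leP \<Longrightarrow> \<Psi> (\<Phi> f) = f"
    and \<Phi>_\<Psi>: "\<And>g. g \<in> I3 Q leQ \<Longrightarrow> \<Phi> (\<Psi> g) = g"
    using bij bij_betw_inv_into[OF bij] unfolding \<Psi>_def
    by (simp_all add: bij_betw_apply bij_betw_imp_inj_on bij_betw_inv_into_right)
  obtain \<psi> where \<psi>Q: "\<And>y. y \<in> Q \<Longrightarrow> \<psi> y \<in> P"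
    and \<psi>: "\<And>y f. y \<in> Q \<Longrightarrow> f \<in> I3 P leP \<Longrightarrow> \<Phi> f (y, y, y) = f (\<psi> y, \<psi> y, \<psi> y)"
    using alg_iso3_diagonal_map[OF fP fQ ind iso] by blast
  obtain \<phi> where \<phi>P: "\<And>x. x \<in> P \<Longrightarrow> \<phi> x \<in> Q"
    and \<phi>: "\<And>x g. x \<in> P \<Longrightarrow> g \<in> I3 Q leQ \<Longrightarrow> \<Psi> g (x, x, x) = g (\<phi> x, \<phi> x, \<phi> x)"
    using alg_iso3_diagonal_map[OF fQ fP ind alg_iso3_inv[OF iso]] unfolding \<Psi>_def by blast
  have "\<psi> (\<phi> x) = x" if "x \<in> P" for x
    by (rule diagonal_maps_inverse[OF fP \<Phi>_I3 \<Psi>_\<Phi> \<psi> \<phi>P \<phi>]) (use that in simp_all)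
  moreover have "\<phi> (\<psi> y) = y" if "y \<in> Q" for y
    by (rule diagonal_maps_inverse[OF fQ \<Psi>_I3 \<Phi>_\<Psi> \<phi> \<psi>Q \<psi>]) (use that in simp_all)
  ultimately have "bij_betw \<psi> Q P"
    using \<phi>P \<psi>Q by (intro bij_betw_byWitness[of _ \<phi>]) auto
  with \<psi> that show ?thesis by blast
qed

lemma alg_iso3_image_J31:
  assumes iso: "alg_iso3 P leP Q leQ \<Phi>"
    and \<psi>: "\<And>y f. y \<in> Q \<Longrightarrow> f \<in> I3 P leP \<Longrightarrow> \<Phi> f (y, y, y) = f (\<psi> y, \<psi> y, \<psi> y)"
    and onto: "\<psi> ` Q = P"
  shows "\<Phi> ` J31 P leP = J31 Q leQ"
proof -
  note bij = alg_iso3D(1)[OF iso]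
  have J31_iff: "\<Phi> f \<in> J31 Q leQ \<longleftrightarrow> f \<in> J31 P leP" if "f \<in> I3 P leP" for f
    using bij_betw_apply[OF bij that] that onto by (auto simp: J31_def \<psi>)
  have "J31 Q leQ \<subseteq> \<Phi> ` I3 P leP"
    using bij by (auto simp: bij_betw_def J31_def)
  moreover have "J31 P leP \<subseteq> I3 P leP"
    by (auto simp: J31_def)
  ultimately show ?thesis
    using J31_iff by blast
qed

lemma diagonal_map_e1_mod_J31:
  assumes \<psi>: "\<And>y f. y \<in> Q \<Longrightarrow> f \<in> I3 P leP \<Longrightarrow> \<Phi> f (y, y, y) = f (\<psi> y, \<psi> y, \<psi> y)"
    and \<psi>_inj: "inj_on \<psi> Q" and z: "z \<in> Q" "\<psi> z = x"
    and fP: "finite_poset P leP" and fQ: "finite_poset Q leQ" and x: "x \<in> P"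
    and \<Phi>: "\<Phi> (e1 x) \<in> I3 Q leQ"
  shows "(\<lambda>t. \<Phi> (e1 x) t - e1 z t) \<in> J31 Q leQ"
proof -
  have "\<psi> y = x \<longleftrightarrow> y = z" if "y \<in> Q" for y
    using \<psi>_inj z that by (auto dest: inj_onD)
  then have "\<Phi> (e1 x) (y, y, y) - e1 z (y, y, y) = 0" if "y \<in> Q" for y
    using that by (simp add: \<psi> e1_in_I3[OF fP x]) (simp add: e1_def e3_def)
  then show ?thesis
    using diff_in_I3[OF \<Phi> e1_in_I3[OF fQ z(1)]] by (simp add: J31_def)
qed

theorem corollary3p2:
  fixes P :: "'a set" and leP :: "'a \<Rightarrow> 'a \<Rightarrow> bool"
    and Q :: "'b set" and leQ :: "'b \<Rightarrow> 'b \<Rightarrow> bool"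
    and \<Phi> :: "('a \<times> 'a \<times> 'a \<Rightarrow> 'r::comm_ring_1) \<Rightarrow> ('b \<times> 'b \<times> 'b \<Rightarrow> 'r)"
  assumes "finite_poset P leP" and "finite_poset Q leQ"
    and "indecomposable_ring TYPE('r)"
    and "alg_iso3 P leP Q leQ \<Phi>"
  shows "\<Phi> ` J31 P leP = J31 Q leQ
    \<and> (\<exists>\<phi>. bij_betw \<phi> P Q \<and>
          (\<forall>x\<in>P. (\<lambda>t. \<Phi> (e1 x) t - e1 (\<phi> x) t) \<in> J31 Q leQ))"
proof -
  note fP = assms(1) and fQ = assms(2) and iso = assms(4)
  obtain \<psi> where bij: "bij_betw \<psi> Q P"
    and \<psi>: "\<And>y f. y \<in> Q \<Longrightarrow> f \<in> I3 P leP \<Longrightarrow> \<Phi> f (y, y, y) = f (\<psi> y, \<psi> y, \<psi> y)"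
    using alg_iso3_diagonal_bij[OF assms] by blast
  define \<phi> where "\<phi> = inv_into Q \<psi>"
  have "bij_betw \<phi> P Q"
    unfolding \<phi>_def by (rule bij_betw_inv_into[OF bij])
  moreover have "(\<lambda>t. \<Phi> (e1 x) t - e1 (\<phi> x) t) \<in> J31 Q leQ" if "x \<in> P" for x
  proof (rule diagonal_map_e1_mod_J31[OF \<psi> bij_betw_imp_inj_on[OF bij] _ _ fP fQ that])
    show "\<phi> x \<in> Q" "\<psi> (\<phi> x) = x"
      using bij that unfolding \<phi>_def by (auto intro: bij_betw_apply bij_betw_inv_into bij_betw_inv_into_right)
    show "\<Phi> (e1 x) \<in> I3 Q leQ"
      using alg_iso3D(1)[OF iso] e1_in_I3[OF fP that] by (rule bij_betw_apply)
  qed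
  moreover have "\<Phi> ` J31 P leP = J31 Q leQ"
    using alg_iso3_image_J31[OF iso \<psi>] bij by (simp add: bij_betw_def)
  ultimately show ?thesis
    by blast
qed

end
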